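(* Let $1\le p<\infty$ and let $w$ be a weight on $\mathbb{R}^n$. Then $M_0$ is bounded on $\mathcal{LM}^{p}(\varphi,w)$ if and only if $w\in A_0(\mathcal{LM}^{p}(\varphi))$, and this holds if and only if $M_0$ is bounded from $\mathcal{LM}^{p}(\varphi,w)$ to $W\mathcal{LM}^{p}(\varphi,w)$. Moreover, the operator norm in both cases is comparable to $[w]_{A_0(\mathcal{LM}^{p}(\varphi))}$, with constants independent of $w$.
   Context: A weight is a nonnegative locally integrable function on $\mathbb{R}^n$. Let $\varphi$ be a function from the set of Euclidean balls of $\mathbb{R}^n$ to $(0,\infty)$; standing assumptions: $\varphi$ is doubling ($\varphi(2B)\le C\varphi(B)$) and reverse doubling (there are $\delta>0$, $C$ with $\varphi(B_1)/\varphi(B_2)\le C(|B_1|/|B_2|)^\delta$ for balls $B_1\subset B_2$), and characteristic functions of balls belong to $\mathcal{LM}^{p}(\varphi,w)$. $\mathcal{LM}^{p}(\varphi,w)$ consists of measurable $f$ with $\|f\|_{\mathcal{LM}^{p}(\varphi,w)}:=\sup_{R>0}\big(\varphi(B(0,R))^{-1}\int_{B(0,R)}|f|^pw\big)^{1/p}<\infty$; $W\mathcal{LM}^{p}(\varphi,w)$ consists of $f$ with $\sup_{R>0}\sup_{t>0}t\,w(\{x\in B(0,R):|f(x)|>t\})^{1/p}\varphi(B(0,R))^{-1/p}<\infty$. Köthe dual: $\|g\|_{X'}:=\sup\{\int|fg|:\|f\|_X\le1\}$. $M_0f(x):=\sup_{r>|x|}|B(0,r)|^{-1}\int_{|y|<r}|f(y)|\,dy$.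 $[w]_{A_0(\mathcal{LM}^{p}(\varphi))}:=\sup_B\|\chi_B\|_{\mathcal{LM}^{p}(\varphi,w)}\|\chi_B\|_{\mathcal{LM}^{p}(\varphi,w)'}/|B|$ over balls centered at the origin; $A_0(\mathcal{LM}^{p}(\varphi))$ is the class where it is finite. *)

theory Defs
  imports "HOL-Analysis.Analysis"
begin

text \<open>Real powers of extended nonnegative reals (only used with positive exponents):
  infinity stays infinity, finite values use powr.\<close>
definition enn_powr :: "ennreal \<Rightarrow> real \<Rightarrow> ennreal" where
  "enn_powr x a = (if x = \<infinity> then \<infinity> else ennreal (enn2real x powr a))"

definition weight :: "('a::euclidean_space \<Rightarrow> real) \<Rightarrow> bool" where
  "weight w \<longleftrightarrow> (\<forall>x. 0 \<le> w x) \<and> w \<in> borel_measurable lebesgue \<and>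
     (\<forall>K. compact K \<longrightarrow> set_integrable lebesgue K w)"

text \<open>Weighted local Morrey norm of a (nonnegative, extended-valued) function g = |f|.\<close>
definition LM_norm :: "real \<Rightarrow> ('a set \<Rightarrow> real) \<Rightarrow> ('a \<Rightarrow> real) \<Rightarrow>
    ('a::euclidean_space \<Rightarrow> ennreal) \<Rightarrow> ennreal" where
  "LM_norm p \<phi> w g = enn_powr
     (SUP R\<in>{0<..}. (\<integral>\<^sup>+ x\<in>ball 0 R. enn_powr (g x) p * ennreal (w x) \<partial>lebesgue)
                      / ennreal (\<phi> (ball 0 R))) (1 / p)"

text \<open>Weighted weak local Morrey quasi-norm of g = |f|; w(E) is the integral of w over E.\<close>
definition WLM_norm :: "real \<Rightarrow> ('a set \<Rightarrow> real) \<Rightarrow> ('a \<Rightarrow> real) \<Rightarrow>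
    ('a::euclidean_space \<Rightarrow> ennreal) \<Rightarrow> ennreal" where
  "WLM_norm p \<phi> w g =
     (SUP R\<in>{0<..}. SUP t\<in>{0<..}.
        ennreal t
        * enn_powr (\<integral>\<^sup>+ x\<in>{x \<in> ball 0 R. g x > ennreal t}. ennreal (w x) \<partial>lebesgue) (1 / p)
        * ennreal (\<phi> (ball 0 R) powr (- 1 / p)))"

definition LM_dual_norm :: "real \<Rightarrow> ('a set \<Rightarrow> real) \<Rightarrow> ('a \<Rightarrow> real) \<Rightarrow>
    ('a::euclidean_space \<Rightarrow> real) \<Rightarrow> ennreal" where
  "LM_dual_norm p \<phi> w g =
     (SUP f\<in>{f \<in> borel_measurable lebesgue. LM_norm p \<phi> w (\<lambda>x. ennreal \<bar>f x\<bar>) \<le> 1}.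
        \<integral>\<^sup>+ x. ennreal \<bar>f x * g x\<bar> \<partial>lebesgue)"

definition M_zero :: "('a::euclidean_space \<Rightarrow> real) \<Rightarrow> 'a \<Rightarrow> ennreal" where
  "M_zero f x = (SUP r\<in>{r. norm x < r}.
     (\<integral>\<^sup>+ y\<in>ball 0 r. ennreal \<bar>f y\<bar> \<partial>lebesgue) / emeasure lebesgue (ball (0::'a) r))"

definition A0_const :: "real \<Rightarrow> ('a set \<Rightarrow> real) \<Rightarrow> ('a::euclidean_space \<Rightarrow> real) \<Rightarrow> ennreal" where
  "A0_const p \<phi> w = (SUP R\<in>{0<..}.
     LM_norm p \<phi> w (indicator (ball 0 R)) * LM_dual_norm p \<phi> w (indicator (ball 0 R))
     / emeasure lebesgue (ball (0::'a) R))"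

definition bounded_from_LM :: "real \<Rightarrow> ('a set \<Rightarrow> real) \<Rightarrow> ('a \<Rightarrow> real) \<Rightarrow>
    (('a \<Rightarrow> ennreal) \<Rightarrow> ennreal) \<Rightarrow> (('a::euclidean_space \<Rightarrow> real) \<Rightarrow> 'a \<Rightarrow> ennreal) \<Rightarrow> bool" where
  "bounded_from_LM p \<phi> w N2 T \<longleftrightarrow>
     (\<exists>C\<ge>0. \<forall>f \<in> borel_measurable lebesgue. LM_norm p \<phi> w (\<lambda>x. ennreal \<bar>f x\<bar>) < \<infinity> \<longrightarrow>
        N2 (T f) \<le> ennreal C * LM_norm p \<phi> w (\<lambda>x. ennreal \<bar>f x\<bar>))"

definition opnorm_from_LM :: "real \<Rightarrow> ('a set \<Rightarrow> real) \<Rightarrow> ('a \<Rightarrow> real) \<Rightarrow>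
    (('a \<Rightarrow> ennreal) \<Rightarrow> ennreal) \<Rightarrow> (('a::euclidean_space \<Rightarrow> real) \<Rightarrow> 'a \<Rightarrow> ennreal) \<Rightarrow> ennreal" where
  "opnorm_from_LM p \<phi> w N2 T = Inf {ennreal C | C. C \<ge> 0 \<and>
     (\<forall>f \<in> borel_measurable lebesgue. LM_norm p \<phi> w (\<lambda>x. ennreal \<bar>f x\<bar>) < \<infinity> \<longrightarrow>
        N2 (T f) \<le> ennreal C * LM_norm p \<phi> w (\<lambda>x. ennreal \<bar>f x\<bar>))}"

end

theory Submission
  imports Defs
begin

text \<open>
  Lower bound: on B(0,R) the function M_0 f dominates the average of |f| over B(0,R), so a
  weak-type bound with constant C, tested on the unit ball of LM(phi,w), gives
  ||chi_B|| ||chi_B||' / |B| <= C; a strong-type bound implies the weak-type one (Chebyshev).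

  Upper bound: Hoelder's inequality for the Koethe dual and the A_0 condition give
  ||chi_B(0,r)|| avg_B(0,r) |f| <= [w] ||f||. As ||chi_B(0,r)|| increases with r and averages over
  balls of comparable radii are comparable, ||chi_B(0,s)|| M_0 f <= 2^n [w] ||f|| on the annulus
  s/2 <= |x| < s, while w(B(0,s)) <= ||chi_B(0,s)||^p phi(B(0,s)). Summing over the dyadic annuli
  of B(0,R) bounds the integral of (M_0 f)^p w over B(0,R) by (2^n [w] ||f||)^p times the sum of
  the phi(B(0,2^-j R)), which reverse doubling turns into a geometric series dominated by
  phi(B(0,R)).
\<close>

section \<open>Extended nonnegative reals and integrals\<close>

lemma enn_powr_ennreal: "0 \<le> t \<Longrightarrow> enn_powr (ennreal t) a = ennreal (t powr a)"
  by (simp add: enn_powr_def)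

lemma enn_powr_top [simp]: "enn_powr top a = top"
  by (simp add: enn_powr_def)

lemma enn_powr_0 [simp]: "enn_powr 0 a = 0"
  by (simp add: enn_powr_def)

lemma enn_powr_1 [simp]: "enn_powr 1 a = 1"
  by (simp add: enn_powr_def)

lemma enn_powr_eq_0_iff [simp]: "enn_powr x a = 0 \<longleftrightarrow> x = 0"
  by (cases x) (auto simp: enn_powr_ennreal)

lemma enn_powr_eq_top_iff [simp]: "enn_powr x a = top \<longleftrightarrow> x = top"
  by (cases x) (auto simp: enn_powr_ennreal)

lemma enn_powr_mono: "0 < a \<Longrightarrow> x \<le> y \<Longrightarrow> enn_powr x a \<le> enn_powr y a"
  by (cases x; cases y) (auto simp: enn_powr_ennreal powr_mono2 top_unique)

lemma enn_powr_powr_inverse: "0 < a \<Longrightarrow> enn_powr (enn_powr x a) (1 / a) = x"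
  by (cases x) (auto simp: enn_powr_ennreal powr_powr)

lemma enn_powr_mult: "enn_powr (x * y) a = enn_powr x a * enn_powr y a"
  by (cases x; cases y) (auto simp: enn_powr_ennreal ennreal_mult[symmetric] powr_mult
      ennreal_mult_top ennreal_top_mult)

lemma enn_powr_divide_ennreal:
  "0 < c \<Longrightarrow> enn_powr (x / ennreal c) a = enn_powr x a * ennreal (c powr - a)"
  by (simp add: divide_ennreal_def inverse_ennreal enn_powr_mult enn_powr_ennreal powr_minus
      inverse_powr)

lemma enn_powr_SUP:
  assumes "0 < a"
  shows "enn_powr (SUP i\<in>I. f i) a = (SUP i\<in>I. enn_powr (f i) a)"
proof (rule antisym)
  have "(SUP i\<in>I. f i) = (SUP i\<in>I. enn_powr (enn_powr (f i) a) (1 / a))"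
    using assms by (simp add: enn_powr_powr_inverse)
  also have "\<dots> \<le> enn_powr (SUP i\<in>I. enn_powr (f i) a) (1 / a)"
    using assms by (intro SUP_least enn_powr_mono) (auto intro: SUP_upper)
  finally have "enn_powr (SUP i\<in>I. f i) a
      \<le> enn_powr (enn_powr (SUP i\<in>I. enn_powr (f i) a) (1 / a)) a"
    using assms by (rule enn_powr_mono[rotated])
  also have "\<dots> = (SUP i\<in>I. enn_powr (f i) a)"
    using enn_powr_powr_inverse[of "1 / a"] assms by simp
  finally show "enn_powr (SUP i\<in>I. f i) a \<le> (SUP i\<in>I. enn_powr (f i) a)" .
qed (use assms in \<open>auto intro: SUP_least enn_powr_mono SUP_upper\<close>)

lemma borel_measurable_enn_powr [measurable]:
  assumes [measurable]: "g \<in> borel_measurable M"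
  shows "(\<lambda>x. enn_powr (g x) a) \<in> borel_measurable M"
proof -
  have [measurable]: "{x \<in> space M. g x = top} \<in> sets M"
    by measurable
  show ?thesis
    unfolding enn_powr_def by measurable
qed

lemma ennreal_mult_le_of_less:
  fixes a L Y :: ennreal
  assumes "\<And>t. 0 < t \<Longrightarrow> ennreal t < a \<Longrightarrow> ennreal t * L \<le> Y"
  shows "a * L \<le> Y"
proof -
  have "a * L = (SUP x\<in>{..<a}. x * L)"
    using Sup_lessThan[of a] by (simp add: SUP_mult_right_ennreal[symmetric])
  also have "\<dots> \<le> Y"
  proof (rule SUP_least)
    fix x assume "x \<in> {..<a}"
    then obtain t where "x = ennreal t" "0 \<le> t" "ennreal t < a"
      by (cases x) auto
    then show "x * L \<le> Y"
      using assms by (cases "t = 0") auto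
  qed
  finally show ?thesis .
qed

lemma ennreal_divide_eq_mult: "0 < a \<Longrightarrow> x / ennreal a = x * ennreal (1 / a)"
  by (simp add: divide_ennreal_def inverse_ennreal inverse_eq_divide)

lemma nn_integral_abs_mult_indicator:
  "(\<integral>\<^sup>+ x. ennreal \<bar>f x * indicator A x\<bar> \<partial>M) = (\<integral>\<^sup>+ x\<in>A. ennreal \<bar>f x\<bar> \<partial>M)"
  by (intro nn_integral_cong) (simp add: indicator_def)

lemma set_nn_integral_mult_le:
  fixes g w :: "'a \<Rightarrow> ennreal"
  assumes [measurable]: "A \<in> sets M" "w \<in> borel_measurable M"
    and bound: "\<And>x. x \<in> A \<Longrightarrow> a * g x \<le> c"
    and mass: "(\<integral>\<^sup>+ x\<in>A. w x \<partial>M) \<le> a * b" and a: "a \<noteq> \<infinity>"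
  shows "(\<integral>\<^sup>+ x\<in>A. g x * w x \<partial>M) \<le> c * b"
proof (cases "a = 0")
  case True
  \<comment> \<open>the integral of w over A vanishes, and \<open>\<infinity> * 0 = 0\<close> in ennreal\<close>
  have "(\<integral>\<^sup>+ x\<in>A. g x * w x \<partial>M) \<le> (\<integral>\<^sup>+ x. \<infinity> * (w x * indicator A x) \<partial>M)"
    by (intro nn_integral_mono) (simp add: mult.assoc mult_right_mono)
  also have "\<dots> = 0"
    using mass True by (subst nn_integral_cmult) auto
  finally show ?thesis
    by simp
next
  case False
  have "g x \<le> c / a" if "x \<in> A" for x
    using divide_right_mono_ennreal[OF bound[OF that], of a] False a
    by (simp add: mult.commute[of a] mult_divide_eq_ennreal)
  then have "(\<integral>\<^sup>+ x\<in>A. g x * w x \<partial>M) \<le> (\<integral>\<^sup>+ x. c / a * (w x * indicator A x) \<partial>M)"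
    by (intro nn_integral_mono) (auto simp: indicator_def mult_right_mono)
  also have "\<dots> = c / a * (\<integral>\<^sup>+ x\<in>A. w x \<partial>M)"
    by (rule nn_integral_cmult) measurable
  also have "\<dots> \<le> c / a * (a * b)"
    using mass by (rule mult_left_mono) simp
  also have "\<dots> = c * b"
    using False a by (simp add: ennreal_divide_times mult.assoc[symmetric] less_top)
  finally show ?thesis .
qed

lemma sets_lebesgue_ball [measurable]: "ball c r \<in> sets lebesgue"
  by simp

lemma emeasure_lebesgue_ball:
  "0 \<le> r \<Longrightarrow> emeasure lebesgue (ball (c::'a::euclidean_space) r)
    = ennreal (r ^ DIM('a) * measure lebesgue (ball (0::'a) 1))"
  using emeasure_lborel_ball_finite[of c r] content_ball_conv_unit_ball[of r c]
  by (simp add: emeasure_eq_ennreal_measure)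

section \<open>Weighted local Morrey norms\<close>

lemma LM_norm_powr:
  "0 < p \<Longrightarrow> enn_powr (LM_norm p \<phi> w g) p =
    (SUP R\<in>{0<..}. (\<integral>\<^sup>+ x\<in>ball 0 R. enn_powr (g x) p * ennreal (w x) \<partial>lebesgue)
                     / ennreal (\<phi> (ball 0 R)))"
  unfolding LM_norm_def using enn_powr_powr_inverse[of "1 / p"] by simp

lemma LM_norm_mono: "0 < p \<Longrightarrow> (\<And>x. g x \<le> h x) \<Longrightarrow> LM_norm p \<phi> w g \<le> LM_norm p \<phi> w h"
  unfolding LM_norm_def
  by (intro enn_powr_mono SUP_mono' divide_right_mono_ennreal nn_integral_mono mult_right_mono)
    auto

lemma LM_norm_cmult:
  fixes g :: "'a::euclidean_space \<Rightarrow> ennreal"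
  assumes p: "0 < p"
    and [measurable]: "g \<in> borel_measurable lebesgue" "w \<in> borel_measurable lebesgue"
  shows "LM_norm p \<phi> w (\<lambda>x. c * g x) = c * LM_norm p \<phi> w g"
proof -
  have "(\<integral>\<^sup>+ x\<in>ball 0 R. enn_powr (c * g x) p * ennreal (w x) \<partial>lebesgue)
      = enn_powr c p * (\<integral>\<^sup>+ x\<in>ball 0 R. enn_powr (g x) p * ennreal (w x) \<partial>lebesgue)" for R
    by (subst nn_integral_cmult[symmetric]) (auto simp: enn_powr_mult mult_ac)
  then have "LM_norm p \<phi> w (\<lambda>x. c * g x) = enn_powr (enn_powr c p *
      (SUP R\<in>{0<..}. (\<integral>\<^sup>+ x\<in>ball 0 R. enn_powr (g x) p * ennreal (w x) \<partial>lebesgue)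
                        / ennreal (\<phi> (ball 0 R)))) (1 / p)"
    unfolding LM_norm_def by (simp add: SUP_mult_left_ennreal ennreal_times_divide)
  also have "\<dots> = c * LM_norm p \<phi> w g"
    unfolding LM_norm_def using p by (simp add: enn_powr_mult enn_powr_powr_inverse)
  finally show ?thesis .
qed

lemma set_nn_integral_weight_ball_le:
  assumes p: "0 < p" and s: "0 < s" and \<phi>: "0 < \<phi> (ball 0 s)"
  shows "(\<integral>\<^sup>+ x\<in>ball 0 s. ennreal (w x) \<partial>lebesgue)
    \<le> enn_powr (LM_norm p \<phi> w (indicator (ball (0::'a::euclidean_space) s))) p * ennreal (\<phi> (ball 0 s))"
proof -
  define X where "X = (\<integral>\<^sup>+ x\<in>ball (0::'a) s. ennreal (w x) \<partial>lebesgue)"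
  have "X = (\<integral>\<^sup>+ x\<in>ball 0 s. enn_powr (indicator (ball (0::'a) s) x) p * ennreal (w x) \<partial>lebesgue)"
    unfolding X_def by (intro nn_integral_cong) (simp add: indicator_def)
  then have "X / ennreal (\<phi> (ball 0 s)) \<le> enn_powr (LM_norm p \<phi> w (indicator (ball 0 s))) p"
    unfolding LM_norm_powr[OF p] using s by (intro SUP_upper2[where i = s]) auto
  then have "X / ennreal (\<phi> (ball 0 s)) * ennreal (\<phi> (ball 0 s))
      \<le> enn_powr (LM_norm p \<phi> w (indicator (ball 0 s))) p * ennreal (\<phi> (ball 0 s))"
    by (rule mult_right_mono) simp
  then show ?thesis
    using \<phi> by (simp add: X_def ennreal_divide_times)
qed

lemma WLM_norm_le_LM_norm:
  fixes g :: "'a::euclidean_space \<Rightarrow> ennreal"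
  assumes p: "0 < p" and pos: "\<And>r. 0 < r \<Longrightarrow> 0 < \<phi> (ball 0 r)"
    and [measurable]: "g \<in> borel_measurable lebesgue" "w \<in> borel_measurable lebesgue"
  shows "WLM_norm p \<phi> w g \<le> LM_norm p \<phi> w g"
  unfolding WLM_norm_def
proof (intro SUP_least)
  fix R t :: real assume "R \<in> {0<..}" "t \<in> {0<..}"
  then have R: "0 < R" and t: "0 < t" by auto
  define E where "E = {x \<in> ball 0 R. g x > ennreal t}"
  have [measurable]: "E \<in> sets lebesgue"
    unfolding E_def by measurable
  have "ennreal (t powr p) * (\<integral>\<^sup>+ x\<in>E. ennreal (w x) \<partial>lebesgue)
      = (\<integral>\<^sup>+ x. ennreal (t powr p) * (ennreal (w x) * indicator E x) \<partial>lebesgue)"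
    by (subst nn_integral_cmult) auto
  also have "\<dots> \<le> (\<integral>\<^sup>+ x\<in>ball 0 R. enn_powr (g x) p * ennreal (w x) \<partial>lebesgue)"
  proof (intro nn_integral_mono)
    fix x
    have "ennreal (t powr p) \<le> enn_powr (g x) p" if "x \<in> E"
      using that enn_powr_mono[OF p, of "ennreal t" "g x"] t
      by (auto simp: E_def enn_powr_ennreal less_imp_le)
    then show "ennreal (t powr p) * (ennreal (w x) * indicator E x)
        \<le> enn_powr (g x) p * ennreal (w x) * indicator (ball 0 R) x"
      by (auto simp: E_def indicator_def mult_right_mono)
  qed
  finally have chebyshev: "ennreal (t powr p) * (\<integral>\<^sup>+ x\<in>E. ennreal (w x) \<partial>lebesgue)
      \<le> (\<integral>\<^sup>+ x\<in>ball 0 R. enn_powr (g x) p * ennreal (w x) \<partial>lebesgue)" .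
  have "ennreal t * enn_powr (\<integral>\<^sup>+ x\<in>E. ennreal (w x) \<partial>lebesgue) (1 / p)
        * ennreal (\<phi> (ball 0 R) powr (- 1 / p))
      = enn_powr (ennreal (t powr p) * (\<integral>\<^sup>+ x\<in>E. ennreal (w x) \<partial>lebesgue)
          / ennreal (\<phi> (ball 0 R))) (1 / p)"
    using p t pos[OF R]
    by (simp add: enn_powr_divide_ennreal enn_powr_mult enn_powr_ennreal powr_powr)
  also have "\<dots> \<le> enn_powr ((\<integral>\<^sup>+ x\<in>ball 0 R. enn_powr (g x) p * ennreal (w x) \<partial>lebesgue)
      / ennreal (\<phi> (ball 0 R))) (1 / p)"
    using p chebyshev by (intro enn_powr_mono divide_right_mono_ennreal) auto
  also have "\<dots> \<le> LM_norm p \<phi> w g"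
    unfolding LM_norm_def using p R by (intro enn_powr_mono SUP_upper) auto
  finally show "ennreal t * enn_powr (\<integral>\<^sup>+ x\<in>{x \<in> ball 0 R. g x > ennreal t}. ennreal (w x) \<partial>lebesgue) (1 / p)
      * ennreal (\<phi> (ball 0 R) powr (- 1 / p)) \<le> LM_norm p \<phi> w g"
    unfolding E_def .
qed

lemma mult_LM_norm_indicator_le_WLM_norm:
  assumes p: "0 < p" and pos: "\<And>r. 0 < r \<Longrightarrow> 0 < \<phi> (ball 0 r)"
    and above: "\<And>x. x \<in> B \<Longrightarrow> a \<le> g x"
  shows "a * LM_norm p \<phi> w (indicator B) \<le> WLM_norm p \<phi> (w::'a::euclidean_space \<Rightarrow> real) g"
proof (rule ennreal_mult_le_of_less)
  fix t :: real assume t: "0 < t" "ennreal t < a"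
  have "ennreal t * LM_norm p \<phi> w (indicator B) = (SUP R\<in>{0<..}. ennreal t *
      enn_powr ((\<integral>\<^sup>+ x\<in>ball 0 R. enn_powr (indicator B x) p * ennreal (w x) \<partial>lebesgue)
        / ennreal (\<phi> (ball 0 R))) (1 / p))"
    unfolding LM_norm_def using p by (simp add: enn_powr_SUP SUP_mult_left_ennreal)
  also have "\<dots> \<le> WLM_norm p \<phi> w g"
  proof (rule SUP_least)
    fix R :: real assume "R \<in> {0<..}"
    then have R: "0 < R" by simp
    define E where "E = {x \<in> ball 0 R. g x > ennreal t}"
    have "(\<integral>\<^sup>+ x\<in>ball 0 R. enn_powr (indicator B x) p * ennreal (w x) \<partial>lebesgue)
        \<le> (\<integral>\<^sup>+ x\<in>E. ennreal (w x) \<partial>lebesgue)"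
      using above t by (intro nn_integral_mono) (auto simp: indicator_def E_def intro: less_le_trans)
    then have "ennreal t * enn_powr ((\<integral>\<^sup>+ x\<in>ball 0 R. enn_powr (indicator B x) p * ennreal (w x) \<partial>lebesgue)
          / ennreal (\<phi> (ball 0 R))) (1 / p)
        \<le> ennreal t * (enn_powr (\<integral>\<^sup>+ x\<in>E. ennreal (w x) \<partial>lebesgue) (1 / p)
          * ennreal (\<phi> (ball 0 R) powr (- 1 / p)))"
      using p pos[OF R]
      by (intro mult_left_mono) (auto simp: enn_powr_divide_ennreal[symmetric]
          intro!: enn_powr_mono divide_right_mono_ennreal)
    also have "\<dots> \<le> WLM_norm p \<phi> w g"
      unfolding WLM_norm_def E_def using R t
      by (intro SUP_upper2[where i = R] SUP_upper2[where i = t]) (auto simp: mult.assoc)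
    finally show "ennreal t * enn_powr ((\<integral>\<^sup>+ x\<in>ball 0 R. enn_powr (indicator B x) p * ennreal (w x) \<partial>lebesgue)
        / ennreal (\<phi> (ball 0 R))) (1 / p) \<le> WLM_norm p \<phi> w g" .
  qed
  finally show "ennreal t * LM_norm p \<phi> w (indicator B) \<le> WLM_norm p \<phi> w g" .
qed

lemma nn_integral_le_LM_norm_mult_dual_norm:
  assumes p: "0 < p"
    and [measurable]: "f \<in> borel_measurable lebesgue" "g \<in> borel_measurable lebesgue"
      "w \<in> borel_measurable lebesgue"
    and Nf: "LM_norm p \<phi> w (\<lambda>x. ennreal \<bar>f x\<bar>) < \<infinity>"
    and Dg: "LM_dual_norm p \<phi> w g < \<infinity>"
  shows "(\<integral>\<^sup>+ x. ennreal \<bar>f x * g x\<bar> \<partial>lebesgue)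
    \<le> LM_norm p \<phi> w (\<lambda>x. ennreal \<bar>f x\<bar>) * LM_dual_norm p \<phi> (w::'a::euclidean_space \<Rightarrow> real) g"
proof -
  define I where "I = (\<integral>\<^sup>+ x. ennreal \<bar>f x * g x\<bar> \<partial>lebesgue)"
  obtain n where n: "LM_norm p \<phi> w (\<lambda>x. ennreal \<bar>f x\<bar>) = ennreal n" "0 \<le> n"
    using Nf by (cases "LM_norm p \<phi> w (\<lambda>x. ennreal \<bar>f x\<bar>)") auto
  obtain d where d: "LM_dual_norm p \<phi> w g = ennreal d" "0 \<le> d"
    using Dg by (cases "LM_dual_norm p \<phi> w g") auto
  have scaled: "I \<le> ennreal (c * d)" if c: "n < c" for c
  proof -
    have "LM_norm p \<phi> w (\<lambda>x. ennreal \<bar>f x / c\<bar>) = ennreal (1 / c) * ennreal n"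
      using LM_norm_cmult[OF p, of "\<lambda>x. ennreal \<bar>f x\<bar>" w \<phi> "ennreal (1 / c)"] n c
      by (simp add: ennreal_mult[symmetric] abs_divide)
    also have "\<dots> \<le> 1"
      using n c by (simp add: ennreal_mult[symmetric])
    finally have "(\<integral>\<^sup>+ x. ennreal \<bar>f x / c * g x\<bar> \<partial>lebesgue) \<le> ennreal d"
      unfolding d(1)[symmetric] LM_dual_norm_def by (intro SUP_upper) auto
    moreover have "(\<integral>\<^sup>+ x. ennreal \<bar>f x / c * g x\<bar> \<partial>lebesgue) = ennreal (1 / c) * I"
      unfolding I_def using n c
      by (subst nn_integral_cmult[symmetric])
        (auto simp: ennreal_mult[symmetric] abs_mult abs_divide intro!: nn_integral_cong)
    ultimately have "ennreal c * (ennreal (1 / c) * I) \<le> ennreal c * ennreal d"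
      by (simp add: mult_left_mono)
    then show ?thesis
      using n c d by (simp add: mult.assoc[symmetric] ennreal_mult[symmetric])
  qed
  show ?thesis
    unfolding I_def[symmetric]
  proof (rule ennreal_le_epsilon)
    fix e :: real assume e: "0 < e"
    have "I \<le> ennreal ((n + e / (d + 1)) * d)"
      using e d by (intro scaled) auto
    also have "\<dots> \<le> ennreal (n * d + e)"
    proof (intro ennreal_leI)
      have "e / (d + 1) * d \<le> e"
        using e d by (simp add: field_simps)
      then show "(n + e / (d + 1)) * d \<le> n * d + e"
        by (simp add: algebra_simps)
    qed
    finally show "I \<le> LM_norm p \<phi> w (\<lambda>x. ennreal \<bar>f x\<bar>) * LM_dual_norm p \<phi> w g + ennreal e"
      using n d e by (simp add: ennreal_mult ennreal_plus[symmetric])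
  qed
qed

section \<open>The maximal operator M_0\<close>

definition ball_average :: "('a::euclidean_space \<Rightarrow> real) \<Rightarrow> real \<Rightarrow> ennreal" where
  "ball_average f r =
     (\<integral>\<^sup>+ y\<in>ball 0 r. ennreal \<bar>f y\<bar> \<partial>lebesgue) / emeasure lebesgue (ball (0::'a) r)"

lemma M_zero_eq_SUP_ball_average: "M_zero f x = (SUP r\<in>{r. norm x < r}. ball_average f r)"
  unfolding M_zero_def ball_average_def ..

lemma borel_measurable_M_zero [measurable]: "M_zero f \<in> borel_measurable lebesgue"
proof (rule borel_measurableI_greater)
  fix c
  have "{x. c < M_zero f x} = (\<Union>r\<in>{r. c < ball_average f r}. ball 0 r)"
    by (auto simp: M_zero_eq_SUP_ball_average less_SUP_iff)
  then have "open {x. c < M_zero f x}"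
    by auto
  then show "{x \<in> space lebesgue. c < M_zero f x} \<in> sets lebesgue"
    by simp
qed

lemma ball_average_le_larger_ball:
  fixes f :: "'a::euclidean_space \<Rightarrow> real"
  assumes r: "0 < r" and rs: "r \<le> s"
  shows "ball_average f r \<le> ennreal ((s / r) ^ DIM('a)) * ball_average f s"
proof -
  define v where "v = measure lebesgue (ball (0::'a) 1)"
  define I where "I = (\<integral>\<^sup>+ y\<in>ball 0 s. ennreal \<bar>f y\<bar> \<partial>lebesgue)"
  have v: "0 < v"
    unfolding v_def using content_ball_pos[of 1 "0::'a"] by simp
  have s: "0 < s"
    using r rs by linarith
  have "ball_average f r \<le> I / ennreal (r ^ DIM('a) * v)"
    unfolding ball_average_def I_def v_def emeasure_lebesgue_ball[OF less_imp_le[OF r]]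
    using rs by (intro divide_right_mono_ennreal nn_integral_mono) (auto simp: indicator_def)
  also have "\<dots> = I * ennreal ((s / r) ^ DIM('a) * (1 / (s ^ DIM('a) * v)))"
    using r s v by (simp add: ennreal_divide_eq_mult power_divide)
  also have "\<dots> = ennreal ((s / r) ^ DIM('a)) * (I * ennreal (1 / (s ^ DIM('a) * v)))"
    using r s v by (subst ennreal_mult) (auto simp: mult_ac)
  also have "I * ennreal (1 / (s ^ DIM('a) * v)) = ball_average f s"
    unfolding ball_average_def I_def v_def emeasure_lebesgue_ball[OF less_imp_le[OF s]]
    using s v by (simp add: ennreal_divide_eq_mult v_def)
  finally show ?thesis .
qed

lemma LM_norm_indicator_mult_ball_average_le:
  assumes p: "0 < p"
    and [measurable]: "f \<in> borel_measurable lebesgue" "w \<in> borel_measurable lebesgue"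
    and Nf: "LM_norm p \<phi> w (\<lambda>x. ennreal \<bar>f x\<bar>) < \<infinity>" and K: "A0_const p \<phi> w < \<infinity>"
    and r: "0 < r"
  shows "LM_norm p \<phi> w (indicator (ball 0 r)) * ball_average f r
    \<le> LM_norm p \<phi> w (\<lambda>x. ennreal \<bar>f x\<bar>) * A0_const p \<phi> (w::'a::euclidean_space \<Rightarrow> real)"
proof -
  define L where "L = LM_norm p \<phi> w (indicator (ball (0::'a) r))"
  define D where "D = LM_dual_norm p \<phi> w (indicator (ball (0::'a) r))"
  define m where "m = emeasure lebesgue (ball (0::'a) r)"
  have m: "m \<noteq> 0" "m \<noteq> \<infinity>"
    unfolding m_def emeasure_lebesgue_ball[OF less_imp_le[OF r]]
    using r content_ball_pos[of 1 "0::'a"] by auto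
  have LDK: "L * D / m \<le> A0_const p \<phi> w"
    unfolding A0_const_def L_def D_def m_def using r by (intro SUP_upper2[where i = r]) auto
  show ?thesis
  proof (cases "D = \<infinity>")
    case True
    then have "L = 0"
      using LDK K m by (auto simp: ennreal_mult_top ennreal_top_divide split: if_splits)
    then show ?thesis
      by (simp add: L_def)
  next
    case False
    have "ball_average f r \<le> LM_norm p \<phi> w (\<lambda>x. ennreal \<bar>f x\<bar>) * D / m"
      unfolding ball_average_def m_def D_def nn_integral_abs_mult_indicator[symmetric]
      using False p Nf
      by (intro divide_right_mono_ennreal nn_integral_le_LM_norm_mult_dual_norm)
        (auto simp: D_def less_top)
    then have "L * ball_average f r \<le> L * (LM_norm p \<phi> w (\<lambda>x. ennreal \<bar>f x\<bar>) * D / m)"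
      by (rule mult_left_mono) simp
    also have "\<dots> = LM_norm p \<phi> w (\<lambda>x. ennreal \<bar>f x\<bar>) * (L * D / m)"
      by (simp add: ennreal_times_divide ennreal_divide_times mult_ac)
    also have "\<dots> \<le> LM_norm p \<phi> w (\<lambda>x. ennreal \<bar>f x\<bar>) * A0_const p \<phi> w"
      using LDK by (rule mult_left_mono) simp
    finally show ?thesis
      unfolding L_def .
  qed
qed

lemma LM_norm_indicator_mult_M_zero_le:
  fixes x :: "'a::euclidean_space"
  assumes p: "0 < p" and f: "f \<in> borel_measurable lebesgue" and w: "w \<in> borel_measurable lebesgue"
    and Nf: "LM_norm p \<phi> w (\<lambda>x. ennreal \<bar>f x\<bar>) < \<infinity>" and K: "A0_const p \<phi> w < \<infinity>"
    and x: "s / 2 \<le> norm x" "norm x < s"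
  shows "LM_norm p \<phi> w (indicator (ball 0 s)) * M_zero f x
    \<le> ennreal (2 ^ DIM('a)) * (LM_norm p \<phi> w (\<lambda>x. ennreal \<bar>f x\<bar>) * A0_const p \<phi> w)"
  unfolding M_zero_eq_SUP_ball_average SUP_mult_left_ennreal
proof (rule SUP_least)
  define L where "L = (\<lambda>r. LM_norm p \<phi> w (indicator (ball (0::'a) r)))"
  define NK where "NK = LM_norm p \<phi> w (\<lambda>x. ennreal \<bar>f x\<bar>) * A0_const p \<phi> w"
  have s: "0 < s"
    using x norm_ge_zero[of x] by linarith
  fix r assume "r \<in> {r. norm x < r}"
  then have r: "norm x < r" "0 < r"
    by (auto intro: le_less_trans[OF norm_ge_zero])
  have NK: "NK \<le> ennreal (2 ^ DIM('a)) * NK"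
    using mult_right_mono[of 1 "ennreal (2 ^ DIM('a))" NK] by simp
  show "L s * ball_average f r \<le> ennreal (2 ^ DIM('a)) * NK"
  proof (cases "s \<le> r")
    case True
    then have "L s \<le> L r"
      unfolding L_def using p by (intro LM_norm_mono) (auto simp: indicator_def)
    then have "L s * ball_average f r \<le> L r * ball_average f r"
      by (rule mult_right_mono) simp
    also have "\<dots> \<le> NK"
      unfolding L_def NK_def by (rule LM_norm_indicator_mult_ball_average_le[OF p f w Nf K r(2)])
    finally show ?thesis
      using NK by (rule order_trans)
  next
    case False
    have "ennreal ((s / r) ^ DIM('a)) \<le> ennreal (2 ^ DIM('a))"
      using r x s by (intro ennreal_leI power_mono) (auto simp: divide_le_eq)
    then have "ball_average f r \<le> ennreal (2 ^ DIM('a)) * ball_average f s"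
      using False r by (intro order_trans[OF ball_average_le_larger_ball mult_right_mono]) auto
    then have "L s * ball_average f r \<le> ennreal (2 ^ DIM('a)) * (L s * ball_average f s)"
      by (auto simp: mult_ac intro: mult_left_mono order_trans)
    also have "\<dots> \<le> ennreal (2 ^ DIM('a)) * NK"
      unfolding L_def NK_def
      by (intro mult_left_mono LM_norm_indicator_mult_ball_average_le[OF p f w Nf K s]) simp
    finally show ?thesis .
  qed
qed

section \<open>Reverse doubling and dyadic decomposition\<close>

text \<open>Only balls centred at the origin enter the norms, M_0 and the A_0 constant.\<close>

definition reverse_doubling_at_0 :: "('a::euclidean_space set \<Rightarrow> real) \<Rightarrow> real \<Rightarrow> real \<Rightarrow> bool" where
  "reverse_doubling_at_0 \<phi> C \<delta> \<longleftrightarrow> (\<forall>r1 r2. 0 < r1 \<longrightarrow> r1 \<le> r2 \<longrightarrow>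
     \<phi> (ball 0 r1) / \<phi> (ball 0 r2)
       \<le> C * (measure lebesgue (ball (0::'a) r1) / measure lebesgue (ball (0::'a) r2)) powr \<delta>)"

lemma reverse_doubling_at_0I:
  fixes \<phi> :: "'a::euclidean_space set \<Rightarrow> real"
  assumes "\<forall>c1 r1 c2 r2. 0 < r1 \<longrightarrow> 0 < r2 \<longrightarrow> ball c1 r1 \<subseteq> ball c2 r2 \<longrightarrow>
    \<phi> (ball c1 r1) / \<phi> (ball c2 r2) \<le> C * (measure lebesgue (ball c1 r1) / measure lebesgue (ball c2 r2)) powr \<delta>"
  shows "reverse_doubling_at_0 \<phi> C \<delta>"
  unfolding reverse_doubling_at_0_def
proof (intro allI impI)
  fix r1 r2 :: real
  assume "0 < r1" "r1 \<le> r2"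
  then show "\<phi> (ball 0 r1) / \<phi> (ball 0 r2)
      \<le> C * (measure lebesgue (ball (0::'a) r1) / measure lebesgue (ball (0::'a) r2)) powr \<delta>"
    using assms[rule_format, of r1 r2 0 0] subset_ball[of r1 r2 0] by simp
qed

lemma reverse_doubling_at_0D:
  fixes \<phi> :: "'a::euclidean_space set \<Rightarrow> real"
  assumes "reverse_doubling_at_0 \<phi> C \<delta>" and "0 < r1" and "r1 \<le> r2"
  shows "\<phi> (ball 0 r1) / \<phi> (ball 0 r2)
    \<le> C * (measure lebesgue (ball (0::'a) r1) / measure lebesgue (ball (0::'a) r2)) powr \<delta>"
  using assms unfolding reverse_doubling_at_0_def by blast

lemma reverse_doubling_const_ge_1:
  fixes \<phi> :: "'a::euclidean_space set \<Rightarrow> real"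
  assumes pos: "\<And>r. 0 < r \<Longrightarrow> 0 < \<phi> (ball 0 r)"
    and rd: "reverse_doubling_at_0 \<phi> Cr \<delta>"
  shows "1 \<le> Cr"
  using reverse_doubling_at_0D[OF rd, of 1 1] pos[of 1] content_ball_pos[of 1 "0::'a"] by simp

lemma phi_ball_dyadic_le:
  fixes \<phi> :: "'a::euclidean_space set \<Rightarrow> real" and \<delta> :: real
  assumes pos: "\<And>r. 0 < r \<Longrightarrow> 0 < \<phi> (ball 0 r)"
    and rd: "reverse_doubling_at_0 \<phi> Cr \<delta>"
    and R: "0 < R"
  shows "\<phi> (ball 0 (R / 2 ^ j)) \<le> Cr * (2 powr - (real DIM('a) * \<delta>)) ^ j * \<phi> (ball 0 R)"
proof -
  define v where "v = measure lebesgue (ball (0::'a) 1)"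
  have v: "0 < v"
    unfolding v_def using content_ball_pos[of 1 "0::'a"] by simp
  have "measure lebesgue (ball (0::'a) (R / 2 ^ j)) / measure lebesgue (ball (0::'a) R)
      = (R / 2 ^ j) ^ DIM('a) * v / (R ^ DIM('a) * v)"
    using content_ball_conv_unit_ball[of "R / 2 ^ j" "0::'a"] content_ball_conv_unit_ball[of R "0::'a"] R
    by (simp add: v_def)
  also have "\<dots> = 1 / 2 ^ (j * DIM('a))"
    using R v by (simp add: power_divide power_mult)
  also have "\<dots> = 2 powr - real (j * DIM('a))"
    using powr_realpow[of 2 "j * DIM('a)"] by (simp add: powr_minus_divide)
  finally have ratio: "measure lebesgue (ball (0::'a) (R / 2 ^ j)) / measure lebesgue (ball (0::'a) R)
      = 2 powr - real (j * DIM('a))" .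
  have "R / 2 ^ j \<le> R / 1"
    using R by (intro divide_left_mono) auto
  then have "\<phi> (ball 0 (R / 2 ^ j)) / \<phi> (ball 0 R)
      \<le> Cr * (measure lebesgue (ball (0::'a) (R / 2 ^ j)) / measure lebesgue (ball (0::'a) R)) powr \<delta>"
    using R by (intro reverse_doubling_at_0D[OF rd]) auto
  also have "\<dots> = Cr * (2 powr - real (j * DIM('a))) powr \<delta>"
    unfolding ratio ..
  also have "(2 powr - real (j * DIM('a))) powr \<delta> = (2 powr - (real DIM('a) * \<delta>)) ^ j"
    by (simp add: powr_powr powr_power mult_ac)
  finally show ?thesis
    using pos[OF R] by (simp add: divide_le_eq)
qed

lemma suminf_phi_ball_dyadic_le:
  fixes \<phi> :: "'a::euclidean_space set \<Rightarrow> real" and \<delta> :: real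
  assumes pos: "\<And>r. 0 < r \<Longrightarrow> 0 < \<phi> (ball 0 r)"
    and rd: "reverse_doubling_at_0 \<phi> Cr \<delta>"
    and \<delta>: "0 < \<delta>" and R: "0 < R"
  shows "(\<Sum>j. ennreal (\<phi> (ball 0 (R / 2 ^ j))))
    \<le> ennreal (Cr / (1 - 2 powr - (real DIM('a) * \<delta>)) * \<phi> (ball 0 R))"
proof -
  define q :: real where "q = 2 powr - (real DIM('a) * \<delta>)"
  have q: "0 < q" "q < 1"
    using \<delta> by (auto simp: q_def intro!: powr_less_one)
  have Cr: "0 \<le> Cr"
    using reverse_doubling_const_ge_1[OF pos rd] by simp
  have "(\<Sum>j. ennreal (\<phi> (ball 0 (R / 2 ^ j)))) \<le> (\<Sum>j. ennreal (Cr * \<phi> (ball 0 R) * q ^ j))"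
    using phi_ball_dyadic_le[OF pos rd R]
    by (intro suminf_le summableI ennreal_leI) (simp add: q_def mult_ac)
  also have "\<dots> = ennreal (\<Sum>j. Cr * \<phi> (ball 0 R) * q ^ j)"
    using Cr pos[OF R] q by (intro suminf_ennreal2 summable_mult summable_geometric) auto
  also have "(\<Sum>j. Cr * \<phi> (ball 0 R) * q ^ j) = Cr / (1 - q) * \<phi> (ball 0 R)"
    using q by (simp add: suminf_mult suminf_geometric)
  finally show ?thesis
    unfolding q_def .
qed

lemma dyadic_annulus_cover:
  fixes x :: "'a::real_normed_vector"
  assumes "x \<noteq> 0" and "norm x < R"
  shows "\<exists>j. R / 2 ^ j / 2 \<le> norm x \<and> norm x < R / 2 ^ j"
proof -
  have "0 < norm x"
    using assms(1) by simp
  moreover from this have "0 < R"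
    using assms(2) by linarith
  ultimately have "0 < norm x / R"
    by simp
  then obtain n where "(1 / 2 :: real) ^ n < norm x / R"
    using real_arch_pow_inv[of "norm x / R" "1 / 2"] by auto
  then have "R / 2 ^ n \<le> norm x"
    using assms by (auto simp: field_simps power_one_over le_less_trans[OF norm_ge_zero])
  then have "\<exists>j. \<not> R / 2 ^ j \<le> norm x \<and> R / 2 ^ Suc j \<le> norm x"
    using assms by (intro exists_least_lemma) auto
  then show ?thesis
    by (auto simp: field_simps)
qed

lemma set_nn_integral_ball_le_suminf_annuli:
  fixes G :: "'a::euclidean_space \<Rightarrow> ennreal"
  assumes [measurable]: "G \<in> borel_measurable lebesgue"
  shows "(\<integral>\<^sup>+ x\<in>ball 0 R. G x \<partial>lebesgue)
    \<le> (\<Sum>j. \<integral>\<^sup>+ x\<in>ball 0 (R / 2 ^ j) - ball 0 (R / 2 ^ j / 2). G x \<partial>lebesgue)"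
proof -
  define A where "A j = ball (0::'a) (R / 2 ^ j) - ball 0 (R / 2 ^ j / 2)" for j :: nat
  have "AE x in lebesgue. G x * indicator (ball 0 R) x \<le> (\<Sum>j. G x * indicator (A j) x)"
    using AE_completion[OF AE_lborel_singleton[of 0]]
  proof (rule AE_mp, intro AE_I2 impI)
    fix x :: 'a assume "x \<noteq> 0"
    show "G x * indicator (ball 0 R) x \<le> (\<Sum>j. G x * indicator (A j) x)"
    proof (cases "x \<in> ball 0 R")
      case True
      then obtain j where "R / 2 ^ j / 2 \<le> norm x" "norm x < R / 2 ^ j"
        using dyadic_annulus_cover[OF \<open>x \<noteq> 0\<close>, of R] by auto
      then have "x \<in> A j"
        by (simp add: A_def)
      then show ?thesis
        using True sum_le_suminf[of "\<lambda>j. G x * indicator (A j) x" "{j}"] by simp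
    qed simp
  qed
  then have "(\<integral>\<^sup>+ x\<in>ball 0 R. G x \<partial>lebesgue) \<le> (\<integral>\<^sup>+ x. (\<Sum>j. G x * indicator (A j) x) \<partial>lebesgue)"
    by (rule nn_integral_mono_AE)
  also have "\<dots> = (\<Sum>j. \<integral>\<^sup>+ x\<in>A j. G x \<partial>lebesgue)"
    unfolding A_def by (rule nn_integral_suminf) measurable
  finally show ?thesis
    unfolding A_def .
qed

section \<open>Boundedness of M_0\<close>

lemma nn_integral_M_zero_powr_le:
  fixes \<phi> :: "'a::euclidean_space set \<Rightarrow> real" and \<delta> :: real
  assumes p: "0 < p" and pos: "\<And>r. 0 < r \<Longrightarrow> 0 < \<phi> (ball 0 r)"
    and rd: "reverse_doubling_at_0 \<phi> Cr \<delta>" and \<delta>: "0 < \<delta>"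
    and f: "f \<in> borel_measurable lebesgue" and w: "w \<in> borel_measurable lebesgue"
    and Nf: "LM_norm p \<phi> w (\<lambda>x. ennreal \<bar>f x\<bar>) < \<infinity>" and K: "A0_const p \<phi> w < \<infinity>"
    and fin: "\<And>r. 0 < r \<Longrightarrow> LM_norm p \<phi> w (indicator (ball 0 r)) < \<infinity>"
    and R: "0 < R"
  shows "(\<integral>\<^sup>+ x\<in>ball 0 R. enn_powr (M_zero f x) p * ennreal (w x) \<partial>lebesgue)
    \<le> enn_powr (ennreal (2 ^ DIM('a)) * (LM_norm p \<phi> w (\<lambda>x. ennreal \<bar>f x\<bar>) * A0_const p \<phi> w)) p
      * ennreal (Cr / (1 - 2 powr - (real DIM('a) * \<delta>)) * \<phi> (ball 0 R))"
proof -
  define C where "C = ennreal (2 ^ DIM('a)) * (LM_norm p \<phi> w (\<lambda>x. ennreal \<bar>f x\<bar>) * A0_const p \<phi> w)"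
  define s where "s j = R / 2 ^ j" for j :: nat
  define A where "A j = ball (0::'a) (s j) - ball 0 (s j / 2)" for j
  define G where "G x = enn_powr (M_zero f x) p * ennreal (w x)" for x
  note [measurable] = f w
  have s: "0 < s j" for j
    unfolding s_def using R by simp
  have [measurable]: "A j \<in> sets lebesgue" for j
    unfolding A_def by measurable
  have [measurable]: "G \<in> borel_measurable lebesgue"
    unfolding G_def by measurable
  have "(\<integral>\<^sup>+ x\<in>ball 0 R. G x \<partial>lebesgue) \<le> (\<Sum>j. \<integral>\<^sup>+ x\<in>A j. G x \<partial>lebesgue)"
    unfolding A_def s_def by (rule set_nn_integral_ball_le_suminf_annuli) measurable
  also have "\<dots> \<le> (\<Sum>j. enn_powr C p * ennreal (\<phi> (ball 0 (s j))))"
  proof (intro suminf_le summableI)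
    fix j
    define L where "L = LM_norm p \<phi> w (indicator (ball (0::'a) (s j)))"
    show "(\<integral>\<^sup>+ x\<in>A j. G x \<partial>lebesgue) \<le> enn_powr C p * ennreal (\<phi> (ball 0 (s j)))"
      unfolding G_def
    proof (rule set_nn_integral_mult_le[where a = "enn_powr L p"])
      show "enn_powr L p * enn_powr (M_zero f x) p \<le> enn_powr C p" if "x \<in> A j" for x
        unfolding enn_powr_mult[symmetric] L_def C_def using that p
        by (intro enn_powr_mono LM_norm_indicator_mult_M_zero_le[OF p f w Nf K]) (auto simp: A_def)
      have "(\<integral>\<^sup>+ x\<in>A j. ennreal (w x) \<partial>lebesgue) \<le> (\<integral>\<^sup>+ x\<in>ball 0 (s j). ennreal (w x) \<partial>lebesgue)"
        by (intro nn_integral_mono) (auto simp: A_def indicator_def)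
      then show "(\<integral>\<^sup>+ x\<in>A j. ennreal (w x) \<partial>lebesgue) \<le> enn_powr L p * ennreal (\<phi> (ball 0 (s j)))"
        unfolding L_def using set_nn_integral_weight_ball_le[where \<phi> = \<phi> and w = w, OF p s pos[OF s]] by (rule order_trans)
      show "enn_powr L p \<noteq> \<infinity>"
        using fin[OF s] by (simp add: L_def less_top)
    qed (simp_all add: w)
  qed
  also have "\<dots> = enn_powr C p * (\<Sum>j. ennreal (\<phi> (ball 0 (s j))))"
    by simp
  also have "\<dots> \<le> enn_powr C p * ennreal (Cr / (1 - 2 powr - (real DIM('a) * \<delta>)) * \<phi> (ball 0 R))"
    unfolding s_def by (intro mult_left_mono suminf_phi_ball_dyadic_le[OF pos rd \<delta> R] zero_le)
  finally show ?thesis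
    unfolding G_def C_def .
qed

lemma LM_norm_M_zero_le:
  fixes \<phi> :: "'a::euclidean_space set \<Rightarrow> real" and \<delta> :: real
  assumes p: "0 < p" and pos: "\<And>r. 0 < r \<Longrightarrow> 0 < \<phi> (ball 0 r)"
    and rd: "reverse_doubling_at_0 \<phi> Cr \<delta>" and \<delta>: "0 < \<delta>"
    and f: "f \<in> borel_measurable lebesgue" and w: "w \<in> borel_measurable lebesgue"
    and Nf: "LM_norm p \<phi> w (\<lambda>x. ennreal \<bar>f x\<bar>) < \<infinity>" and K: "A0_const p \<phi> w < \<infinity>"
    and fin: "\<And>r. 0 < r \<Longrightarrow> LM_norm p \<phi> w (indicator (ball 0 r)) < \<infinity>"
  shows "LM_norm p \<phi> w (M_zero f)
    \<le> ennreal (2 ^ DIM('a) * (Cr / (1 - 2 powr - (real DIM('a) * \<delta>))) powr (1 / p))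
      * A0_const p \<phi> w * LM_norm p \<phi> w (\<lambda>x. ennreal \<bar>f x\<bar>)"
proof -
  define Cq where "Cq = Cr / (1 - 2 powr - (real DIM('a) * \<delta>))"
  define C where "C = ennreal (2 ^ DIM('a)) * (LM_norm p \<phi> w (\<lambda>x. ennreal \<bar>f x\<bar>) * A0_const p \<phi> w)"
  have Cq: "0 \<le> Cq"
    using reverse_doubling_const_ge_1[OF pos rd] \<delta> powr_less_one[of 2 "- (real DIM('a) * \<delta>)"]
    by (simp add: Cq_def)
  have "(SUP R\<in>{0<..}. (\<integral>\<^sup>+ x\<in>ball 0 R. enn_powr (M_zero f x) p * ennreal (w x) \<partial>lebesgue)
      / ennreal (\<phi> (ball 0 R))) \<le> enn_powr C p * ennreal Cq"
  proof (rule SUP_least)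
    fix R :: real assume "R \<in> {0<..}"
    then have R: "0 < R" by simp
    have "(\<integral>\<^sup>+ x\<in>ball 0 R. enn_powr (M_zero f x) p * ennreal (w x) \<partial>lebesgue) / ennreal (\<phi> (ball 0 R))
        \<le> enn_powr C p * ennreal (Cq * \<phi> (ball 0 R)) / ennreal (\<phi> (ball 0 R))"
      unfolding Cq_def C_def
      by (intro divide_right_mono_ennreal nn_integral_M_zero_powr_le[OF p pos rd \<delta> f w Nf K fin R])
    also have "\<dots> = enn_powr C p * ennreal Cq"
      using Cq pos[OF R] by (simp add: ennreal_mult mult_divide_eq_ennreal flip: mult.assoc)
    finally show "(\<integral>\<^sup>+ x\<in>ball 0 R. enn_powr (M_zero f x) p * ennreal (w x) \<partial>lebesgue)
        / ennreal (\<phi> (ball 0 R)) \<le> enn_powr C p * ennreal Cq" .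
  qed
  then have "LM_norm p \<phi> w (M_zero f) \<le> enn_powr (enn_powr C p * ennreal Cq) (1 / p)"
    unfolding LM_norm_def using p by (intro enn_powr_mono) auto
  also have "\<dots> = C * ennreal (Cq powr (1 / p))"
    unfolding enn_powr_mult enn_powr_powr_inverse[OF p] enn_powr_ennreal[OF Cq] ..
  also have "\<dots> = ennreal (2 ^ DIM('a) * Cq powr (1 / p)) * A0_const p \<phi> w * LM_norm p \<phi> w (\<lambda>x. ennreal \<bar>f x\<bar>)"
  proof -
    have "ennreal (2 ^ DIM('a) * Cq powr (1 / p)) = ennreal (2 ^ DIM('a)) * ennreal (Cq powr (1 / p))"
      by (rule ennreal_mult) auto
    then show ?thesis
      unfolding C_def by (simp only: mult_ac)
  qed
  finally show ?thesis
    unfolding Cq_def .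
qed

definition LM_bounded_with ::
    "real \<Rightarrow> ('a set \<Rightarrow> real) \<Rightarrow> ('a \<Rightarrow> real) \<Rightarrow> (('a \<Rightarrow> ennreal) \<Rightarrow> ennreal)
      \<Rightarrow> (('a::euclidean_space \<Rightarrow> real) \<Rightarrow> 'a \<Rightarrow> ennreal) \<Rightarrow> real \<Rightarrow> bool" where
  "LM_bounded_with p \<phi> w N2 T C \<longleftrightarrow>
     (\<forall>f \<in> borel_measurable lebesgue. LM_norm p \<phi> w (\<lambda>x. ennreal \<bar>f x\<bar>) < \<infinity> \<longrightarrow>
        N2 (T f) \<le> ennreal C * LM_norm p \<phi> w (\<lambda>x. ennreal \<bar>f x\<bar>))"

lemma bounded_from_LM_iff: "bounded_from_LM p \<phi> w N2 T \<longleftrightarrow> (\<exists>C\<ge>0. LM_bounded_with p \<phi> w N2 T C)"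
  unfolding bounded_from_LM_def LM_bounded_with_def ..

lemma opnorm_from_LM_eq:
  "opnorm_from_LM p \<phi> w N2 T = Inf {ennreal C | C. C \<ge> 0 \<and> LM_bounded_with p \<phi> w N2 T C}"
  unfolding opnorm_from_LM_def LM_bounded_with_def ..

lemma LM_operator_norm_comparison:
  fixes A :: ennreal and c :: real
  assumes lower: "\<And>C. LM_bounded_with p \<phi> w N2 T C \<Longrightarrow> A \<le> ennreal C"
    and upper: "A < \<infinity> \<Longrightarrow> LM_bounded_with p \<phi> w N2 T (c * enn2real A)" and c: "0 < c"
  shows "(bounded_from_LM p \<phi> w N2 T \<longleftrightarrow> A < \<infinity>)
    \<and> A \<le> opnorm_from_LM p \<phi> w N2 T \<and> opnorm_from_LM p \<phi> w N2 T \<le> ennreal c * A"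
proof (intro conjI)
  show "bounded_from_LM p \<phi> w N2 T \<longleftrightarrow> A < \<infinity>"
    unfolding bounded_from_LM_iff
  proof
    assume "\<exists>C\<ge>0. LM_bounded_with p \<phi> w N2 T C"
    then show "A < \<infinity>"
      using lower by (auto intro: le_less_trans[OF _ ennreal_less_top])
  next
    assume "A < \<infinity>"
    then show "\<exists>C\<ge>0. LM_bounded_with p \<phi> w N2 T C"
      using upper c by (intro exI[of _ "c * enn2real A"]) simp
  qed
  show "A \<le> opnorm_from_LM p \<phi> w N2 T"
    unfolding opnorm_from_LM_eq using lower by (auto intro: Inf_greatest)
  show "opnorm_from_LM p \<phi> w N2 T \<le> ennreal c * A"
  proof (cases "A < \<infinity>")
    case True
    then have "opnorm_from_LM p \<phi> w N2 T \<le> ennreal (c * enn2real A)"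
      unfolding opnorm_from_LM_eq using upper c by (intro Inf_lower) auto
    also have "\<dots> = ennreal c * A"
      using True c by (simp add: ennreal_mult less_top)
    finally show ?thesis .
  qed (use c in \<open>simp add: not_less top_unique\<close>)
qed

lemma A0_const_le_of_weak_type:
  fixes w :: "'a::euclidean_space \<Rightarrow> real"
  assumes p: "0 < p" and pos: "\<And>r. 0 < r \<Longrightarrow> 0 < \<phi> (ball 0 r)"
    and weak: "LM_bounded_with p \<phi> w (WLM_norm p \<phi> w) M_zero C"
  shows "A0_const p \<phi> w \<le> ennreal C"
  unfolding A0_const_def
proof (rule SUP_least)
  fix R :: real
  define L where "L = LM_norm p \<phi> w (indicator (ball (0::'a) R))"
  define F where "F = {f \<in> borel_measurable lebesgue. LM_norm p \<phi> w (\<lambda>x. ennreal \<bar>f x\<bar>) \<le> 1}"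
  have "L * LM_dual_norm p \<phi> w (indicator (ball 0 R)) / emeasure lebesgue (ball (0::'a) R)
      = (SUP f\<in>F. L * ball_average f R)"
    unfolding LM_dual_norm_def ball_average_def F_def nn_integral_abs_mult_indicator
    by (simp add: SUP_mult_left_ennreal SUP_divide_ennreal ennreal_times_divide)
  also have "\<dots> \<le> ennreal C"
  proof (rule SUP_least)
    fix f assume "f \<in> F"
    then have f: "f \<in> borel_measurable lebesgue" and Nf: "LM_norm p \<phi> w (\<lambda>x. ennreal \<bar>f x\<bar>) \<le> 1"
      by (auto simp: F_def)
    have "L * ball_average f R \<le> WLM_norm p \<phi> w (M_zero f)"
      unfolding L_def mult.commute[of _ "ball_average f R"]
      by (intro mult_LM_norm_indicator_le_WLM_norm[where \<phi> = \<phi>, OF p pos])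
        (auto simp: M_zero_eq_SUP_ball_average intro: SUP_upper)
    also have "\<dots> \<le> ennreal C * LM_norm p \<phi> w (\<lambda>x. ennreal \<bar>f x\<bar>)"
      using weak f Nf by (auto simp: LM_bounded_with_def le_less_trans[OF Nf])
    also have "\<dots> \<le> ennreal C"
      using mult_left_mono[OF Nf, of "ennreal C"] by simp
    finally show "L * ball_average f R \<le> ennreal C" .
  qed
  finally show "LM_norm p \<phi> w (indicator (ball 0 R)) * LM_dual_norm p \<phi> w (indicator (ball 0 R))
      / emeasure lebesgue (ball (0::'a) R) \<le> ennreal C"
    unfolding L_def .
qed

lemma LM_bounded_with_weak_of_strong:
  assumes p: "0 < p" and pos: "\<And>r. 0 < r \<Longrightarrow> 0 < \<phi> (ball 0 r)"
    and w: "w \<in> borel_measurable lebesgue"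
    and strong: "LM_bounded_with p \<phi> w (LM_norm p \<phi> w) M_zero C"
  shows "LM_bounded_with p \<phi> w (WLM_norm p \<phi> w) M_zero C"
  using strong WLM_norm_le_LM_norm[where \<phi> = \<phi>, OF p pos borel_measurable_M_zero w]
  unfolding LM_bounded_with_def by (blast intro: order_trans)

lemma LM_bounded_with_M_zero:
  fixes \<phi> :: "'a::euclidean_space set \<Rightarrow> real" and \<delta> :: real
  assumes p: "0 < p" and pos: "\<And>r. 0 < r \<Longrightarrow> 0 < \<phi> (ball 0 r)"
    and rd: "reverse_doubling_at_0 \<phi> Cr \<delta>" and \<delta>: "0 < \<delta>"
    and w: "w \<in> borel_measurable lebesgue" and K: "A0_const p \<phi> w < \<infinity>"
    and fin: "\<And>r. 0 < r \<Longrightarrow> LM_norm p \<phi> w (indicator (ball 0 r)) < \<infinity>"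
  shows "LM_bounded_with p \<phi> w (LM_norm p \<phi> w) M_zero
    (2 ^ DIM('a) * (Cr / (1 - 2 powr - (real DIM('a) * \<delta>))) powr (1 / p) * enn2real (A0_const p \<phi> w))"
  unfolding LM_bounded_with_def
proof (intro ballI impI)
  fix f :: "'a \<Rightarrow> real"
  assume f: "f \<in> borel_measurable lebesgue" and Nf: "LM_norm p \<phi> w (\<lambda>x. ennreal \<bar>f x\<bar>) < \<infinity>"
  have "ennreal (2 ^ DIM('a) * (Cr / (1 - 2 powr - (real DIM('a) * \<delta>))) powr (1 / p)) * A0_const p \<phi> w
      = ennreal (2 ^ DIM('a) * (Cr / (1 - 2 powr - (real DIM('a) * \<delta>))) powr (1 / p)
          * enn2real (A0_const p \<phi> w))"
    using K by (simp add: ennreal_mult less_top)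
  then show "LM_norm p \<phi> w (M_zero f) \<le> ennreal (2 ^ DIM('a) * (Cr / (1 - 2 powr - (real DIM('a) * \<delta>)))
      powr (1 / p) * enn2real (A0_const p \<phi> w)) * LM_norm p \<phi> w (\<lambda>x. ennreal \<bar>f x\<bar>)"
    using LM_norm_M_zero_le[OF p pos rd \<delta> f w Nf K fin] by simp
qed

lemma M_zero_boundedness:
  fixes \<phi> :: "'a::euclidean_space set \<Rightarrow> real" and \<delta> :: real
  assumes p: "0 < p" and pos: "\<And>r. 0 < r \<Longrightarrow> 0 < \<phi> (ball 0 r)"
    and rd: "reverse_doubling_at_0 \<phi> Cr \<delta>" and \<delta>: "0 < \<delta>"
    and w: "w \<in> borel_measurable lebesgue"
    and fin: "\<And>r. 0 < r \<Longrightarrow> LM_norm p \<phi> w (indicator (ball 0 r)) < \<infinity>"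
  defines "c \<equiv> 2 ^ DIM('a) * (Cr / (1 - 2 powr - (real DIM('a) * \<delta>))) powr (1 / p)"
  shows "(bounded_from_LM p \<phi> w (LM_norm p \<phi> w) M_zero \<longleftrightarrow> A0_const p \<phi> w < \<infinity>)
      \<and> A0_const p \<phi> w \<le> opnorm_from_LM p \<phi> w (LM_norm p \<phi> w) M_zero
      \<and> opnorm_from_LM p \<phi> w (LM_norm p \<phi> w) M_zero \<le> ennreal c * A0_const p \<phi> w"
    and "(bounded_from_LM p \<phi> w (WLM_norm p \<phi> w) M_zero \<longleftrightarrow> A0_const p \<phi> w < \<infinity>)
      \<and> A0_const p \<phi> w \<le> opnorm_from_LM p \<phi> w (WLM_norm p \<phi> w) M_zero
      \<and> opnorm_from_LM p \<phi> w (WLM_norm p \<phi> w) M_zero \<le> ennreal c * A0_const p \<phi> w"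
proof -
  have c: "0 < c"
    using reverse_doubling_const_ge_1[OF pos rd] \<delta> powr_less_one[of 2 "- (real DIM('a) * \<delta>)"]
    by (simp add: c_def)
  have weak_of_strong: "LM_bounded_with p \<phi> w (WLM_norm p \<phi> w) M_zero C"
    if "LM_bounded_with p \<phi> w (LM_norm p \<phi> w) M_zero C" for C
    using LM_bounded_with_weak_of_strong[where \<phi> = \<phi>, OF p pos w that] by simp
  have weak_lower: "A0_const p \<phi> w \<le> ennreal C"
    if "LM_bounded_with p \<phi> w (WLM_norm p \<phi> w) M_zero C" for C
    using A0_const_le_of_weak_type[where \<phi> = \<phi>, OF p pos that] by simp
  have upper: "LM_bounded_with p \<phi> w (LM_norm p \<phi> w) M_zero (c * enn2real (A0_const p \<phi> w))"
    if "A0_const p \<phi> w < \<infinity>"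
    using LM_bounded_with_M_zero[where \<phi> = \<phi>, OF p pos rd \<delta> w that fin] by (simp add: c_def)
  show "(bounded_from_LM p \<phi> w (LM_norm p \<phi> w) M_zero \<longleftrightarrow> A0_const p \<phi> w < \<infinity>)
      \<and> A0_const p \<phi> w \<le> opnorm_from_LM p \<phi> w (LM_norm p \<phi> w) M_zero
      \<and> opnorm_from_LM p \<phi> w (LM_norm p \<phi> w) M_zero \<le> ennreal c * A0_const p \<phi> w"
    using weak_lower weak_of_strong upper c by (intro LM_operator_norm_comparison) blast+
  show "(bounded_from_LM p \<phi> w (WLM_norm p \<phi> w) M_zero \<longleftrightarrow> A0_const p \<phi> w < \<infinity>)
      \<and> A0_const p \<phi> w \<le> opnorm_from_LM p \<phi> w (WLM_norm p \<phi> w) M_zero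
      \<and> opnorm_from_LM p \<phi> w (WLM_norm p \<phi> w) M_zero \<le> ennreal c * A0_const p \<phi> w"
    using weak_lower weak_of_strong upper c by (intro LM_operator_norm_comparison) blast+
qed

theorem proposition6p4:
  fixes \<phi> :: "'a::euclidean_space set \<Rightarrow> real" and p :: real
  assumes p: "1 \<le> p"
    and pos: "\<And>c r. 0 < r \<Longrightarrow> 0 < \<phi> (ball c r)"
    and doubling: "\<exists>C. \<forall>c r. 0 < r \<longrightarrow> \<phi> (ball c (2 * r)) \<le> C * \<phi> (ball c r)"
    and rev_doubling: "\<exists>\<delta>>0. \<exists>C. \<forall>c1 r1 c2 r2. 0 < r1 \<longrightarrow> 0 < r2 \<longrightarrow>
        ball c1 r1 \<subseteq> ball c2 r2 \<longrightarrow>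
        \<phi> (ball c1 r1) / \<phi> (ball c2 r2)
          \<le> C * (measure lebesgue (ball c1 r1) / measure lebesgue (ball c2 r2)) powr \<delta>"
  shows "\<exists>c1>0. \<exists>c2>0. \<forall>w. weight w \<longrightarrow>
      (\<forall>c r. 0 < r \<longrightarrow> LM_norm p \<phi> w (indicator (ball c r)) < \<infinity>) \<longrightarrow>
        (bounded_from_LM p \<phi> w (LM_norm p \<phi> w) M_zero \<longleftrightarrow> A0_const p \<phi> w < \<infinity>)
      \<and> (A0_const p \<phi> w < \<infinity> \<longleftrightarrow> bounded_from_LM p \<phi> w (WLM_norm p \<phi> w) M_zero)
      \<and> ennreal c1 * A0_const p \<phi> w \<le> opnorm_from_LM p \<phi> w (LM_norm p \<phi> w) M_zero
      \<and> opnorm_from_LM p \<phi> w (LM_norm p \<phi> w) M_zero \<le> ennreal c2 * A0_const p \<phi> w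
      \<and> ennreal c1 * A0_const p \<phi> w \<le> opnorm_from_LM p \<phi> w (WLM_norm p \<phi> w) M_zero
      \<and> opnorm_from_LM p \<phi> w (WLM_norm p \<phi> w) M_zero \<le> ennreal c2 * A0_const p \<phi> w"
proof -
  obtain \<delta> Cr where \<delta>: "0 < \<delta>" and rd: "reverse_doubling_at_0 \<phi> Cr \<delta>"
    using rev_doubling reverse_doubling_at_0I by blast
  define c2 where "c2 = 2 ^ DIM('a) * (Cr / (1 - 2 powr - (real DIM('a) * \<delta>))) powr (1 / p)"
  have p0: "0 < p" and pos0: "\<And>r. 0 < r \<Longrightarrow> 0 < \<phi> (ball 0 r)"
    using p pos by auto
  have "0 < c2"
    using reverse_doubling_const_ge_1[OF pos0 rd] \<delta> powr_less_one[of 2 "- (real DIM('a) * \<delta>)"]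
    by (simp add: c2_def)
  with M_zero_boundedness[OF p0 pos0 rd \<delta>, folded c2_def] show ?thesis
    by (intro exI[of _ 1] exI[of _ c2]) (auto simp: weight_def)
qed

end
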